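(* Let $K/\mathbb{Q}$ be a finite extension with ring of integers $A$, let $f:A\to\mathbb{N}$ be any function, let $t$ be a positive integer, and let $H(f,t)=\sum_{k\in A}\big(k^{f(k)}(k^t-1)\big)$ be the sum of the principal ideals generated by the elements $k^{f(k)}(k^t-1)$. Then $\ker pr_t\subseteq H(f,t)$; in particular $H(f,t)$ is $t$-congruing.
   Context: For a maximal ideal $\mathfrak p$ of $A$, $H^{\mathfrak p}_t$ is the ideal of the completion $\hat A_{\mathfrak p}$ generated by all $x^t-1$ with $x\in\hat A_{\mathfrak p}^\times$; $pr_t:A\to\prod_{\mathfrak p}\hat A_{\mathfrak p}/H^{\mathfrak p}_t$ (over all maximal ideals) has $\mathfrak p$-component completion followed by reduction mod $H^{\mathfrak p}_t$. An ideal $I$ is $t$-congruing if for every $a\in A$ there is $N\in\mathbb{N}$ with $a^N(a^t-1)\in I$. *)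

theory Defs
  imports "HOL-Computational_Algebra.Polynomial" Complex_Main
begin

definition is_subfield :: "complex set \<Rightarrow> bool" where
  "is_subfield K \<longleftrightarrow> 0 \<in> K \<and> 1 \<in> K \<and>
     (\<forall>x\<in>K. \<forall>y\<in>K. x + y \<in> K \<and> x - y \<in> K \<and> x * y \<in> K) \<and>
     (\<forall>x\<in>K. x \<noteq> 0 \<longrightarrow> inverse x \<in> K)"

definition finite_over_rat :: "complex set \<Rightarrow> bool" where
  "finite_over_rat K \<longleftrightarrow>
     (\<exists>B. finite B \<and> B \<subseteq> K \<and> K = {\<Sum>b\<in>B. q b * b | q. \<forall>b. q b \<in> \<rat>})"

definition number_field :: "complex set \<Rightarrow> bool" where
  "number_field K \<longleftrightarrow> is_subfield K \<and> finite_over_rat K"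

definition ring_of_integers :: "complex set \<Rightarrow> complex set" where
  "ring_of_integers K = {x \<in> K. algebraic_int x}"

definition is_ideal :: "complex set \<Rightarrow> complex set \<Rightarrow> bool" where
  "is_ideal A I \<longleftrightarrow> I \<subseteq> A \<and> 0 \<in> I \<and> (\<forall>x\<in>I. \<forall>y\<in>I. x + y \<in> I) \<and>
     (\<forall>a\<in>A. \<forall>x\<in>I. a * x \<in> I)"

definition gen_ideal :: "complex set \<Rightarrow> complex set \<Rightarrow> complex set" where
  "gen_ideal A S = \<Inter>{I. is_ideal A I \<and> S \<subseteq> I}"

definition maximal_ideal :: "complex set \<Rightarrow> complex set \<Rightarrow> bool" where
  "maximal_ideal A P \<longleftrightarrow> is_ideal A P \<and> P \<noteq> A \<and>
     (\<forall>J. is_ideal A J \<and> P \<subseteq> J \<longrightarrow> J = P \<or> J = A)"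

definition ideal_mult :: "complex set \<Rightarrow> complex set \<Rightarrow> complex set \<Rightarrow> complex set" where
  "ideal_mult A I J = gen_ideal A {x * y | x y. x \<in> I \<and> y \<in> J}"

fun ideal_pow :: "complex set \<Rightarrow> complex set \<Rightarrow> nat \<Rightarrow> complex set" where
  "ideal_pow A P 0 = A"
| "ideal_pow A P (Suc n) = ideal_mult A (ideal_pow A P n) P"

text \<open>The P-adic completion of A, realised as the inverse limit of the rings A / P^n.
  An element is represented by a compatible sequence of representatives x n \<in> A
  (x m \<equiv> x n mod P^n for m \<ge> n); two representatives give the same element
  iff they agree mod P^n for every n.\<close>

definition completion :: "complex set \<Rightarrow> complex set \<Rightarrow> (nat \<Rightarrow> complex) set" where
  "completion A P = {x. (\<forall>n. x n \<in> A) \<and> (\<forall>n m. n \<le> m \<longrightarrow> x m - x n \<in> ideal_pow A P n)}"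

definition compl_eq :: "complex set \<Rightarrow> complex set \<Rightarrow> (nat \<Rightarrow> complex) \<Rightarrow> (nat \<Rightarrow> complex) \<Rightarrow> bool" where
  "compl_eq A P x y \<longleftrightarrow> (\<forall>n. x n - y n \<in> ideal_pow A P n)"

definition compl_units :: "complex set \<Rightarrow> complex set \<Rightarrow> (nat \<Rightarrow> complex) set" where
  "compl_units A P = {x \<in> completion A P.
      \<exists>y \<in> completion A P. compl_eq A P (\<lambda>n. x n * y n) (\<lambda>n. 1)}"

text \<open>(Representatives of) the ideal H^P_t of the completion, generated by all
  x^t - 1 with x a unit of the completion: finite combinations
  \<Sum> c_i (x_i^t - 1), with c_i in the completion, up to equality in the completion.\<close>

definition H_loc :: "complex set \<Rightarrow> complex set \<Rightarrow> nat \<Rightarrow> (nat \<Rightarrow> complex) set" where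
  "H_loc A P t = {z \<in> completion A P. \<exists>(k::nat) c g.
      (\<forall>i<k. c i \<in> completion A P \<and> g i \<in> compl_units A P) \<and>
      compl_eq A P z (\<lambda>n. \<Sum>i<k. c i n * ((g i n) ^ t - 1))}"

text \<open>Kernel of pr_t: elements whose image in every completion lies in H^P_t
  (the canonical map A \<rightarrow> completion sends a to the constant sequence).\<close>

definition ker_pr :: "complex set \<Rightarrow> nat \<Rightarrow> complex set" where
  "ker_pr A t = {a \<in> A. \<forall>P. maximal_ideal A P \<longrightarrow> (\<lambda>_. a) \<in> H_loc A P t}"

definition H_ft :: "complex set \<Rightarrow> (complex \<Rightarrow> nat) \<Rightarrow> nat \<Rightarrow> complex set" where
  "H_ft A f t = gen_ideal A {k ^ f k * (k ^ t - 1) | k. k \<in> A}"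

definition t_congruing :: "complex set \<Rightarrow> nat \<Rightarrow> complex set \<Rightarrow> bool" where
  "t_congruing A t I \<longleftrightarrow> (\<forall>a\<in>A. \<exists>N::nat. a ^ N * (a ^ t - 1) \<in> I)"

end

theory Submission
  imports Defs "HOL-Computational_Algebra.Primes" "Jordan_Normal_Form.Char_Poly"
begin

text \<open>Let \<open>I\<close> be a \<open>t\<close>-congruing ideal and suppose \<open>a \<in> ker pr\<^sub>t\<close> but \<open>a \<notin> I\<close>. Take a maximal
  ideal \<open>P \<supseteq> (I : a)\<close> and let \<open>Q = {y. s y \<in> I for some s \<notin> P}\<close>. As \<open>I\<close> contains the positive
  integer \<open>2\<^sup>N (2\<^sup>t - 1)\<close>, \<open>P\<close> contains a rational prime \<open>p\<close>, and since \<open>A\<close> has finite rank,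
  \<open>P\<close> is generated by \<open>p\<close> and finitely many further elements, each of which has a power in \<open>Q\<close>;
  hence \<open>P\<^sup>n \<subseteq> Q\<close> for some \<open>n\<close>. Modulo \<open>P\<^sup>n\<close> a unit \<open>x\<close> of the completion is invertible, so
  \<open>x\<^sup>t - 1 \<in> Q\<close> because \<open>x\<^sup>L (x\<^sup>t - 1) \<in> I\<close>. Thus \<open>a \<in> Q\<close>, i.e. \<open>s a \<in> I\<close> for some \<open>s \<notin> P\<close>,
  contradicting \<open>(I : a) \<subseteq> P\<close>. That the algebraic integers of \<open>K\<close> form a ring is proved via
  characteristic polynomials of integer matrices.\<close>

section \<open>Integer spans and algebraic integers\<close>

definition int_span :: "complex set \<Rightarrow> complex set" where
  "int_span S = range (\<lambda>c. \<Sum>s\<in>S. of_int (c s) * s)"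

lemma int_span_base:
  assumes "finite S" and "s \<in> S"
  shows "s \<in> int_span S"
proof -
  have "(\<Sum>u\<in>S. of_int (if u = s then 1 else 0) * u) = (\<Sum>u\<in>S. if u = s then s else 0)"
    by (rule sum.cong) auto
  also have "\<dots> = s" using assms by simp
  finally have "(\<Sum>u\<in>S. of_int (if u = s then 1 else 0) * u) = s" .
  then show ?thesis
    unfolding int_span_def by (intro range_eqI[where x = "\<lambda>u. if u = s then 1 else 0"]) simp
qed

lemma int_span_zero: "0 \<in> int_span S"
  unfolding int_span_def by (rule range_eqI[of _ _ "\<lambda>_. 0"]) simp

lemma int_span_add:
  assumes "x \<in> int_span S" and "y \<in> int_span S"
  shows "x + y \<in> int_span S"
proof -
  obtain c d where "x = (\<Sum>s\<in>S. of_int (c s) * s)" and "y = (\<Sum>s\<in>S. of_int (d s) * s)"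
    using assms unfolding int_span_def by blast
  then have "x + y = (\<Sum>s\<in>S. of_int (c s + d s) * s)"
    by (simp add: sum.distrib distrib_right)
  then show ?thesis unfolding int_span_def by (intro range_eqI[where x = "\<lambda>s. c s + d s"])
qed

lemma int_span_of_int_mult:
  assumes "x \<in> int_span S"
  shows "of_int k * x \<in> int_span S"
proof -
  obtain c where "x = (\<Sum>s\<in>S. of_int (c s) * s)"
    using assms unfolding int_span_def by blast
  then have "of_int k * x = (\<Sum>s\<in>S. of_int (k * c s) * s)"
    by (simp add: sum_distrib_left mult.assoc)
  then show ?thesis unfolding int_span_def by (intro range_eqI[where x = "\<lambda>s. k * c s"])
qed

lemma int_span_sum:
  "finite I \<Longrightarrow> (\<And>i. i \<in> I \<Longrightarrow> g i \<in> int_span S) \<Longrightarrow> sum g I \<in> int_span S"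
  by (induction I rule: finite_induct) (auto intro: int_span_zero int_span_add)

lemma int_span_mult_closed:
  assumes "finite S" and "\<And>s. s \<in> S \<Longrightarrow> z * s \<in> int_span T" and "w \<in> int_span S"
  shows "z * w \<in> int_span T"
proof -
  obtain c where c: "w = (\<Sum>s\<in>S. of_int (c s) * s)"
    using assms(3) unfolding int_span_def by blast
  have "z * w = (\<Sum>s\<in>S. of_int (c s) * (z * s))"
    unfolding c by (simp add: sum_distrib_left mult_ac)
  also have "\<dots> \<in> int_span T"
    using assms(1,2) by (intro int_span_sum int_span_of_int_mult) auto
  finally show ?thesis .
qed

lemma int_span_times:
  assumes "finite S" and "finite T" and "x \<in> int_span S" and "y \<in> int_span T"
  shows "x * y \<in> int_span {u * v | u v. u \<in> S \<and> v \<in> T}"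
proof -
  let ?ST = "{u * v | u v. u \<in> S \<and> v \<in> T}"
  have "?ST = (\<lambda>(u, v). u * v) ` (S \<times> T)" by auto
  then have fin: "finite ?ST" using assms(1,2) by simp
  have "u * y \<in> int_span ?ST" if "u \<in> S" for u
  proof (rule int_span_mult_closed[OF assms(2) _ assms(4)])
    fix v assume "v \<in> T"
    then show "u * v \<in> int_span ?ST" using that int_span_base[OF fin] by blast
  qed
  then have "y * x \<in> int_span ?ST"
    by (intro int_span_mult_closed[OF assms(1) _ assms(3)]) (simp add: mult.commute)
  then show ?thesis by (simp add: mult.commute)
qed

lemma power_degree_in_int_span_lower_powers:
  fixes p :: "int poly"
  assumes root: "poly (map_poly of_int p) x = (0::complex)" and monic: "lead_coeff p = 1"
  shows "x ^ degree p \<in> int_span {x ^ i | i. i < degree p}"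
proof -
  let ?r = "degree p"
  have "poly (map_poly of_int p) x = (\<Sum>i\<le>?r. of_int (coeff p i) * x ^ i)"
    by (simp add: poly_altdef degree_map_poly coeff_map_poly)
  also have "\<dots> = (\<Sum>i<?r. of_int (coeff p i) * x ^ i) + x ^ ?r"
    using monic by (simp add: lessThan_Suc_atMost[symmetric])
  finally have "x ^ ?r = of_int (-1) * (\<Sum>i<?r. of_int (coeff p i) * x ^ i)"
    using root by (simp add: add_eq_0_iff)
  also have "\<dots> \<in> int_span {x ^ i | i. i < ?r}"
    by (intro int_span_of_int_mult int_span_sum) (auto intro!: int_span_of_int_mult int_span_base)
  finally show ?thesis .
qed

lemma power_in_int_span_lower_powers:
  fixes p :: "int poly"
  assumes root: "poly (map_poly of_int p) x = (0::complex)" and monic: "lead_coeff p = 1"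
  shows "x ^ m \<in> int_span {x ^ i | i. i < degree p}"
proof -
  define S where "S = {x ^ i | i. i < degree p}"
  have fin: "finite S" unfolding S_def by simp
  have low: "x ^ i \<in> int_span S" if "i < degree p" for i
    using int_span_base[OF fin] that unfolding S_def by blast
  have top: "x ^ degree p \<in> int_span S"
    unfolding S_def by (rule power_degree_in_int_span_lower_powers[OF root monic])
  have shift: "x * s \<in> int_span S" if s: "s \<in> S" for s
  proof -
    obtain i where i: "s = x ^ i" "i < degree p" using s unfolding S_def by blast
    then consider "Suc i < degree p" | "Suc i = degree p" by linarith
    then show ?thesis using low[of "Suc i"] top i(1) by cases (simp_all flip: power_Suc)
  qed
  have "degree p \<noteq> 0"
  proof
    assume "degree p = 0"
    then have "p = [:1:]" using monic by (metis degree_0_id)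
    then show False using root by simp
  qed
  show "x ^ m \<in> int_span S"
  proof (induction m)
    case 0
    then show ?case using low[of 0] \<open>degree p \<noteq> 0\<close> by simp
  next
    case (Suc m)
    then show ?case using int_span_mult_closed[OF fin shift] by simp
  qed
qed

lemma algebraic_int_if_eigenvalue_int_mat:
  fixes M :: "int mat" and z :: complex
  assumes M: "M \<in> carrier_mat n n" and z: "eigenvalue (map_mat of_int M) z"
  shows "algebraic_int z"
proof -
  have "map_mat of_int M \<in> carrier_mat n n" using M by simp
  then have "poly (char_poly (map_mat of_int M)) z = 0"
    using eigenvalue_root_char_poly z by blast
  moreover have "char_poly (map_mat of_int M) = map_poly of_int (char_poly M)"
    by (rule of_int_hom.char_poly_hom[OF M])
  moreover have "lead_coeff (char_poly M) = 1" using degree_monic_char_poly[OF M] by simp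
  ultimately show ?thesis unfolding algebraic_int_altdef_ipoly by metis
qed

text \<open>\<open>z\<close> is an eigenvalue of the integer matrix of multiplication by \<open>z\<close> on the spanning
  family, hence a root of its monic characteristic polynomial.\<close>

lemma algebraic_int_if_stabilises_int_span:
  fixes z :: complex
  assumes fin: "finite S" and one: "1 \<in> int_span S"
    and stable: "\<And>s. s \<in> S \<Longrightarrow> z * s \<in> int_span S"
  shows "algebraic_int z"
proof -
  obtain s0 where s0: "s0 \<in> S" "s0 \<noteq> 0"
  proof (rule ccontr)
    assume "\<not> thesis"
    then have "\<forall>s\<in>S. s = 0" using that by blast
    moreover obtain c where "1 = (\<Sum>s\<in>S. of_int (c s) * s)"
      using one unfolding int_span_def by blast
    ultimately have "(1::complex) = 0" by (simp add: sum.neutral)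
    then show False by simp
  qed
  obtain ws where ws: "set ws = S" "distinct ws" using finite_distinct_list[OF fin] by blast
  define n where "n = length ws"
  have bij: "bij_betw ((!) ws) {..<n} S"
    using bij_betw_nth[OF ws(2) _ ws(1)[symmetric]] unfolding n_def by simp
  have "\<forall>s\<in>S. \<exists>c. z * s = (\<Sum>u\<in>S. of_int (c u) * u)"
    using stable unfolding int_span_def by blast
  then obtain C where C: "\<And>s. s \<in> S \<Longrightarrow> z * s = (\<Sum>u\<in>S. of_int (C s u) * u)"
    by metis
  define M :: "int mat" where "M = mat n n (\<lambda>(i, j). C (ws ! i) (ws ! j))"
  define Mc :: "complex mat" where "Mc = map_mat of_int M"
  define v where "v = vec n (\<lambda>i. ws ! i)"
  have M: "M \<in> carrier_mat n n" and Mc: "Mc \<in> carrier_mat n n"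
    unfolding Mc_def M_def by simp_all
  have "Mc *\<^sub>v v = z \<cdot>\<^sub>v v"
  proof (rule eq_vecI)
    fix i assume "i < dim_vec (z \<cdot>\<^sub>v v)"
    then have i: "i < n" unfolding v_def by simp
    then have wsi: "ws ! i \<in> S" using ws(1) unfolding n_def by auto
    have "(Mc *\<^sub>v v) $ i = (\<Sum>j<n. of_int (C (ws ! i) (ws ! j)) * ws ! j)"
      using i unfolding Mc_def M_def v_def by (simp add: scalar_prod_def atLeast0LessThan)
    also have "\<dots> = (\<Sum>u\<in>S. of_int (C (ws ! i) u) * u)"
      using sum.reindex_bij_betw[OF bij, of "\<lambda>u. of_int (C (ws ! i) u) * u"] by simp
    also have "\<dots> = z * ws ! i" using C[OF wsi] by simp
    finally show "(Mc *\<^sub>v v) $ i = (z \<cdot>\<^sub>v v) $ i" using i unfolding v_def by simp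
  qed (use Mc in \<open>simp add: v_def\<close>)
  moreover have "v \<noteq> 0\<^sub>v n"
  proof
    assume "v = 0\<^sub>v n"
    moreover obtain k where "k < n" "ws ! k = s0"
      using s0(1) ws(1) unfolding n_def by (metis in_set_conv_nth)
    ultimately show False using s0(2) unfolding v_def by (metis index_vec index_zero_vec(1))
  qed
  ultimately have "eigenvector Mc v z"
    unfolding eigenvector_def using Mc unfolding v_def by auto
  then have "eigenvalue Mc z" unfolding eigenvalue_def by blast
  then show ?thesis unfolding Mc_def by (rule algebraic_int_if_eigenvalue_int_mat[OF M])
qed

lemma algebraic_int_add_mult:
  fixes x y :: complex
  assumes x: "algebraic_int x" and y: "algebraic_int y"
  shows "algebraic_int (x + y)" and "algebraic_int (x * y)"
proof -
  obtain p where p: "poly (map_poly of_int p) x = 0" "lead_coeff p = 1"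
    using x unfolding algebraic_int_altdef_ipoly by blast
  obtain q where q: "poly (map_poly of_int q) y = 0" "lead_coeff q = 1"
    using y unfolding algebraic_int_altdef_ipoly by blast
  define Sx where "Sx = {x ^ i | i. i < degree p}"
  define Sy where "Sy = {y ^ i | i. i < degree q}"
  define S where "S = {u * v | u v. u \<in> Sx \<and> v \<in> Sy}"
  have fx: "finite Sx" and fy: "finite Sy" unfolding Sx_def Sy_def by simp_all
  have "S = (\<lambda>(u, v). u * v) ` (Sx \<times> Sy)" unfolding S_def by auto
  then have fin: "finite S" using fx fy by simp
  have monomial: "x ^ i * y ^ j \<in> int_span S" for i j
    unfolding S_def using int_span_times[OF fx fy] power_in_int_span_lower_powers[OF p]
      power_in_int_span_lower_powers[OF q] unfolding Sx_def Sy_def by blast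
  have one: "1 \<in> int_span S" using monomial[of 0 0] by simp
  have sx: "x * s \<in> int_span S" and sy: "y * s \<in> int_span S" if s: "s \<in> S" for s
  proof -
    obtain i j where s: "s = x ^ i * y ^ j" using s unfolding S_def Sx_def Sy_def by blast
    show "x * s \<in> int_span S" using monomial[of "Suc i" j] unfolding s by (simp add: mult.assoc)
    show "y * s \<in> int_span S" using monomial[of i "Suc j"] unfolding s by (simp add: mult_ac)
  qed
  show "algebraic_int (x + y)"
    by (rule algebraic_int_if_stabilises_int_span[OF fin one]) (simp add: distrib_right int_span_add sx sy)
  show "algebraic_int (x * y)"
    by (rule algebraic_int_if_stabilises_int_span[OF fin one])
      (simp add: mult.assoc int_span_mult_closed[OF fin sx] sy)
qed

section \<open>Subrings of \<open>\<complex>\<close> and their ideals\<close>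

definition is_subring :: "complex set \<Rightarrow> bool" where
  "is_subring A \<longleftrightarrow> 0 \<in> A \<and> 1 \<in> A \<and> (\<forall>x\<in>A. \<forall>y\<in>A. x + y \<in> A \<and> x * y \<in> A \<and> - x \<in> A)"

lemma subring_zero: "is_subring A \<Longrightarrow> 0 \<in> A"
  and subring_one: "is_subring A \<Longrightarrow> 1 \<in> A"
  and subring_add: "is_subring A \<Longrightarrow> x \<in> A \<Longrightarrow> y \<in> A \<Longrightarrow> x + y \<in> A"
  and subring_mult: "is_subring A \<Longrightarrow> x \<in> A \<Longrightarrow> y \<in> A \<Longrightarrow> x * y \<in> A"
  and subring_uminus: "is_subring A \<Longrightarrow> x \<in> A \<Longrightarrow> - x \<in> A"
  unfolding is_subring_def by auto

lemma subring_diff: "is_subring A \<Longrightarrow> x \<in> A \<Longrightarrow> y \<in> A \<Longrightarrow> x - y \<in> A"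
  using subring_add[of A x "- y"] subring_uminus[of A y] by simp

lemma subring_power: "is_subring A \<Longrightarrow> x \<in> A \<Longrightarrow> x ^ n \<in> A"
  by (induction n) (auto intro: subring_one subring_mult)

lemma subring_of_nat: "is_subring A \<Longrightarrow> of_nat n \<in> A"
  by (induction n) (auto intro: subring_zero subring_one subring_add)

lemma subring_of_int: "is_subring A \<Longrightarrow> of_int z \<in> A"
  by (cases z) (auto intro: subring_of_nat subring_uminus simp del: of_nat_Suc)

lemma subring_sum:
  "finite T \<Longrightarrow> is_subring A \<Longrightarrow> (\<And>i. i \<in> T \<Longrightarrow> g i \<in> A) \<Longrightarrow> sum g T \<in> A"
  by (induction T rule: finite_induct) (auto intro: subring_zero subring_add)

lemma subring_prod:
  "finite T \<Longrightarrow> is_subring A \<Longrightarrow> (\<And>i. i \<in> T \<Longrightarrow> g i \<in> A) \<Longrightarrow> prod g T \<in> A"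
  by (induction T rule: finite_induct) (auto intro: subring_one subring_mult)

lemma subring_ring_of_integers:
  assumes "is_subfield K"
  shows "is_subring (ring_of_integers K)"
proof -
  have "- x \<in> K" if "x \<in> K" for x
    using assms that unfolding is_subfield_def by (metis diff_0)
  then show ?thesis
    using assms algebraic_int_add_mult
    unfolding is_subring_def is_subfield_def ring_of_integers_def by auto
qed

lemma ideal_subset: "is_ideal A I \<Longrightarrow> I \<subseteq> A"
  and ideal_zero: "is_ideal A I \<Longrightarrow> 0 \<in> I"
  and ideal_add: "is_ideal A I \<Longrightarrow> x \<in> I \<Longrightarrow> y \<in> I \<Longrightarrow> x + y \<in> I"
  and ideal_lmult: "is_ideal A I \<Longrightarrow> a \<in> A \<Longrightarrow> x \<in> I \<Longrightarrow> a * x \<in> I"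
  unfolding is_ideal_def by auto

lemma ideal_rmult: "is_ideal A I \<Longrightarrow> a \<in> A \<Longrightarrow> x \<in> I \<Longrightarrow> x * a \<in> I"
  using ideal_lmult[of A I a x] by (simp add: mult.commute)

lemma ideal_uminus: "is_subring A \<Longrightarrow> is_ideal A I \<Longrightarrow> x \<in> I \<Longrightarrow> - x \<in> I"
  using ideal_lmult[of A I "- 1" x] subring_uminus[OF _ subring_one] by simp

lemma ideal_diff: "is_subring A \<Longrightarrow> is_ideal A I \<Longrightarrow> x \<in> I \<Longrightarrow> y \<in> I \<Longrightarrow> x - y \<in> I"
  using ideal_add[of A I x "- y"] ideal_uminus[of A I y] by simp

lemma ideal_sum: "finite T \<Longrightarrow> is_ideal A I \<Longrightarrow> (\<And>i. i \<in> T \<Longrightarrow> g i \<in> I) \<Longrightarrow> sum g T \<in> I"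
  by (induction T rule: finite_induct) (auto intro: ideal_zero ideal_add)

lemma ideal_eq_if_one_mem: "is_ideal A I \<Longrightarrow> 1 \<in> I \<Longrightarrow> I = A"
  using ideal_subset ideal_rmult[of A I _ 1] by fastforce

lemma is_ideal_carrier: "is_subring A \<Longrightarrow> is_ideal A A"
  unfolding is_subring_def is_ideal_def by auto

lemma gen_ideal_superset: "S \<subseteq> gen_ideal A S"
  unfolding gen_ideal_def by auto

lemma gen_ideal_minimal: "is_ideal A I \<Longrightarrow> S \<subseteq> I \<Longrightarrow> gen_ideal A S \<subseteq> I"
  unfolding gen_ideal_def by auto

lemma is_ideal_gen_ideal:
  assumes "is_subring A" and "S \<subseteq> A"
  shows "is_ideal A (gen_ideal A S)"
  using assms is_ideal_carrier[OF assms(1)] unfolding is_ideal_def gen_ideal_def by auto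

lemma gen_ideal_mult_closed:
  assumes A: "is_subring A" and S: "S \<subseteq> A" and T: "T \<subseteq> A" and I: "is_ideal A I"
    and gen: "\<And>s u. s \<in> S \<Longrightarrow> u \<in> T \<Longrightarrow> s * u \<in> I"
    and x: "x \<in> gen_ideal A S" and y: "y \<in> gen_ideal A T"
  shows "x * y \<in> I"
proof -
  have left: "is_ideal A {w \<in> A. \<forall>u\<in>U. u * w \<in> I}" for U
    using I A unfolding is_ideal_def is_subring_def by (auto simp: algebra_simps)
  have right: "is_ideal A {w \<in> A. \<forall>u\<in>U. w * u \<in> I}" for U
    using I A unfolding is_ideal_def is_subring_def by (auto simp: distrib_right mult.assoc)
  have "gen_ideal A T \<subseteq> {w \<in> A. \<forall>s\<in>S. s * w \<in> I}"
    using T gen by (intro gen_ideal_minimal[OF left]) auto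
  then have "gen_ideal A S \<subseteq> {w \<in> A. \<forall>u\<in>gen_ideal A T. w * u \<in> I}"
    using S by (intro gen_ideal_minimal[OF right]) auto
  then show ?thesis using x y by auto
qed

lemma is_ideal_colon:
  assumes A: "is_subring A" and I: "is_ideal A I"
  shows "is_ideal A {y \<in> A. y * a \<in> I}"
  using assms unfolding is_ideal_def is_subring_def by (auto simp: distrib_right mult.assoc)

lemma maximal_ideal_one_notin:
  assumes "maximal_ideal A P"
  shows "1 \<notin> P"
  using assms ideal_eq_if_one_mem unfolding maximal_ideal_def by blast

lemma is_ideal_add_principal:
  assumes A: "is_subring A" and P: "is_ideal A P" and x: "x \<in> A"
  shows "is_ideal A {p + x * r | p r. p \<in> P \<and> r \<in> A}"
  unfolding is_ideal_def
proof (intro conjI ballI)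
  show "{p + x * r | p r. p \<in> P \<and> r \<in> A} \<subseteq> A"
    using ideal_subset[OF P] x A by (auto intro: subring_add subring_mult)
  show "0 \<in> {p + x * r | p r. p \<in> P \<and> r \<in> A}"
    using ideal_zero[OF P] subring_zero[OF A] by force
next
  fix u v assume "u \<in> {p + x * r | p r. p \<in> P \<and> r \<in> A}" "v \<in> {p + x * r | p r. p \<in> P \<and> r \<in> A}"
  then obtain p1 r1 p2 r2 where "u = p1 + x * r1" "v = p2 + x * r2"
    and "p1 \<in> P" "r1 \<in> A" "p2 \<in> P" "r2 \<in> A" by blast
  moreover have "u + v = (p1 + p2) + x * (r1 + r2)"
    using calculation(1,2) by (simp add: algebra_simps)
  ultimately show "u + v \<in> {p + x * r | p r. p \<in> P \<and> r \<in> A}"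
    using ideal_add[OF P] subring_add[OF A] by blast
next
  fix a u assume a: "a \<in> A" and "u \<in> {p + x * r | p r. p \<in> P \<and> r \<in> A}"
  then obtain p r where "u = p + x * r" "p \<in> P" "r \<in> A" by blast
  moreover have "a * u = a * p + x * (a * r)" using calculation(1) by (simp add: algebra_simps)
  ultimately show "a * u \<in> {p + x * r | p r. p \<in> P \<and> r \<in> A}"
    using ideal_lmult[OF P a] subring_mult[OF A a] by blast
qed

lemma maximal_ideal_prime:
  assumes A: "is_subring A" and P: "maximal_ideal A P"
    and x: "x \<in> A" and y: "y \<in> A" and xy: "x * y \<in> P" and nx: "x \<notin> P"
  shows "y \<in> P"
proof -
  have PI: "is_ideal A P" using P by (simp add: maximal_ideal_def)
  define J where "J = {p + x * r | p r. p \<in> P \<and> r \<in> A}"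
  have "P \<subseteq> J" unfolding J_def using subring_zero[OF A] by force
  moreover have "x \<in> J" unfolding J_def using ideal_zero[OF PI] subring_one[OF A] by force
  ultimately have "J = A"
    using P nx is_ideal_add_principal[OF A PI x] unfolding maximal_ideal_def J_def by blast
  then obtain p r where pr: "p + x * r = 1" "p \<in> P" "r \<in> A"
    using subring_one[OF A] unfolding J_def by (smt (verit) mem_Collect_eq)
  have "y = (p + x * r) * y" using pr(1) by simp
  then have "y = p * y + (x * y) * r" by (simp add: algebra_simps)
  then show ?thesis
    using ideal_add[OF PI ideal_rmult[OF PI y pr(2)] ideal_rmult[OF PI pr(3) xy]] by simp
qed

lemma is_ideal_Union_chain:
  assumes "C \<noteq> {}" and "\<And>X. X \<in> C \<Longrightarrow> is_ideal A X"
    and "\<And>X Y. X \<in> C \<Longrightarrow> Y \<in> C \<Longrightarrow> X \<subseteq> Y \<or> Y \<subseteq> X"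
  shows "is_ideal A (\<Union>C)"
  unfolding is_ideal_def
proof (intro conjI ballI)
  show "\<Union>C \<subseteq> A" using assms(2) ideal_subset by blast
  show "0 \<in> \<Union>C" using assms(1,2) ideal_zero by blast
next
  fix x y assume "x \<in> \<Union>C" "y \<in> \<Union>C"
  then obtain X Y where "x \<in> X" "y \<in> Y" "X \<in> C" "Y \<in> C" by blast
  then show "x + y \<in> \<Union>C"
    using assms(2) assms(3)[of X Y] ideal_add[of A X x y] ideal_add[of A Y x y] by blast
next
  fix a x assume "a \<in> A" "x \<in> \<Union>C"
  then show "a * x \<in> \<Union>C" using assms(2) ideal_lmult by blast
qed

lemma exists_maximal_ideal_superset:
  assumes A: "is_subring A" and J: "is_ideal A J" and one: "1 \<notin> J"
  shows "\<exists>P. maximal_ideal A P \<and> J \<subseteq> P"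
proof -
  define F where "F = {X. is_ideal A X \<and> J \<subseteq> X \<and> 1 \<notin> X}"
  have "\<Union>C \<in> F" if "C \<noteq> {}" and "subset.chain F C" for C
    using that is_ideal_Union_chain[of C A] unfolding subset.chain_def F_def by blast
  moreover have "J \<in> F" using J one unfolding F_def by blast
  ultimately obtain M where M: "M \<in> F" and M_max: "\<And>X. X \<in> F \<Longrightarrow> M \<subseteq> X \<Longrightarrow> X = M"
    using subset_Zorn_nonempty[of F] by blast
  have "maximal_ideal A M" unfolding maximal_ideal_def
  proof (intro conjI allI impI)
    show "is_ideal A M" using M unfolding F_def by blast
    show "M \<noteq> A" using M subring_one[OF A] unfolding F_def by blast
  next
    fix X assume "is_ideal A X \<and> M \<subseteq> X"
    then show "X = M \<or> X = A"
      using M M_max ideal_eq_if_one_mem unfolding F_def by blast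
  qed
  then show ?thesis using M unfolding F_def by blast
qed

lemma maximal_ideal_contains_prime:
  assumes A: "is_subring A" and P: "maximal_ideal A P"
  shows "of_nat M \<in> P \<Longrightarrow> M > 0 \<Longrightarrow> \<exists>p. prime p \<and> of_nat p \<in> P"
proof (induction M rule: less_induct)
  case (less M)
  have "M \<noteq> 1" using less.prems(1) maximal_ideal_one_notin[OF P] by auto
  then obtain q where q: "prime q" "q dvd M" using prime_factor_nat by blast
  then obtain M' where M': "M = q * M'" by blast
  have "of_nat q * of_nat M' \<in> P" using less.prems(1) M' by simp
  then have "of_nat q \<in> P \<or> of_nat M' \<in> P"
    using maximal_ideal_prime[OF A P subring_of_nat[OF A] subring_of_nat[OF A]] by blast
  moreover have "M' < M" and "M' > 0"
    using M' less.prems(2) prime_gt_1_nat[OF q(1)] by auto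
  ultimately show ?case using q(1) less.IH by blast
qed

lemma of_nat_notin_maximal_ideal_if_not_dvd:
  assumes A: "is_subring A" and P: "maximal_ideal A P"
    and p: "prime p" "of_nat p \<in> P" and m: "\<not> p dvd m"
  shows "of_nat m \<notin> P"
proof
  assume mP: "of_nat m \<in> P"
  have PI: "is_ideal A P" using P by (simp add: maximal_ideal_def)
  have "coprime (int p) (int m)" using prime_imp_coprime_nat[OF p(1) m] by simp
  then obtain u v where uv: "u * int p + v * int m = 1"
    using bezout_int[of "int p" "int m"] by (auto simp: coprime_iff_gcd_eq_1)
  have "of_int u * of_nat p + of_int v * of_nat m \<in> P"
    using ideal_add[OF PI ideal_lmult[OF PI subring_of_int[OF A] p(2)]
        ideal_lmult[OF PI subring_of_int[OF A] mP]] .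
  also have "(of_int u * of_nat p + of_int v * of_nat m :: complex) = 1"
    using arg_cong[OF uv, of "of_int :: int \<Rightarrow> complex"] by simp
  finally show False using maximal_ideal_one_notin[OF P] by simp
qed

section \<open>Maximal ideals are finitely generated\<close>

interpretation rat_vs: vector_space "\<lambda>(q::rat) (z::complex). of_rat q * z"
  by unfold_locales (auto simp: algebra_simps of_rat_add of_rat_mult)

lemma finite_over_rat_imp_subset_span:
  assumes "finite_over_rat K"
  shows "\<exists>B. finite B \<and> K \<subseteq> rat_vs.span B"
proof -
  obtain B where B: "finite B" "K = {\<Sum>b\<in>B. q b * b | q. \<forall>b. q b \<in> \<rat>}"
    using assms unfolding finite_over_rat_def by blast
  have "x \<in> rat_vs.span B" if x: "x \<in> K" for x
  proof -
    obtain q where q: "x = (\<Sum>b\<in>B. q b * b)" "\<forall>b. q b \<in> \<rat>" using x B(2) by blast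
    then have "\<forall>b. \<exists>r. q b = of_rat r" by (metis Rats_cases)
    then obtain r where "\<And>b. q b = of_rat (r b)" by metis
    then show ?thesis unfolding rat_vs.span_finite[OF B(1)] q(1) by auto
  qed
  then show ?thesis using B(1) by blast
qed

text \<open>\<open>X\<close> is linearly independent over \<open>\<int>/p\<close> modulo \<open>p A\<close>.\<close>

definition p_independent :: "complex set \<Rightarrow> int \<Rightarrow> complex set \<Rightarrow> bool" where
  "p_independent A p X \<longleftrightarrow> finite X \<and> X \<subseteq> A \<and>
     (\<forall>c::complex \<Rightarrow> int. \<forall>z\<in>A. (\<Sum>x\<in>X. of_int (c x) * x) = of_int p * z \<longrightarrow> (\<forall>x\<in>X. p dvd c x))"

text \<open>By \<open>p\<close>-independence all coefficients of an integer relation are divisible by \<open>p\<close>, and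
  dividing by \<open>p\<close> strictly decreases the size of a nontrivial relation.\<close>

lemma p_independent_no_int_relation:
  assumes X: "p_independent A p X" and p: "\<bar>p\<bar> \<ge> 2" and A: "0 \<in> A"
    and T: "finite T" "T \<subseteq> X"
  shows "(\<Sum>w\<in>T. of_int (c w) * w) = (0::complex) \<Longrightarrow> v \<in> T \<Longrightarrow> c v \<noteq> 0 \<Longrightarrow> False"
proof (induction "nat (\<Sum>w\<in>T. \<bar>c w\<bar>)" arbitrary: c v rule: less_induct)
  case less
  show False
  proof (cases "\<forall>w\<in>T. p dvd c w")
    case True
    define c' where "c' w = c w div p" for w
    have c: "c w = p * c' w" if "w \<in> T" for w using True that unfolding c'_def by simp
    have "of_int p * (\<Sum>w\<in>T. of_int (c' w) * w) = (\<Sum>w\<in>T. of_int (c w) * w)"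
      by (simp add: sum_distrib_left c mult.assoc)
    then have rel: "(\<Sum>w\<in>T. of_int (c' w) * w) = (0::complex)" using less.prems(1) p by auto
    have cv: "c' v \<noteq> 0" using c[OF less.prems(2)] less.prems(3) by auto
    have le: "\<bar>c' w\<bar> \<le> \<bar>c w\<bar>" and lt: "c' w \<noteq> 0 \<Longrightarrow> \<bar>c' w\<bar> < \<bar>c w\<bar>" if "w \<in> T" for w
      using c[OF that] p by (auto simp: abs_mult intro: order.trans[OF _ mult_right_mono[of 2]])
    have "(\<Sum>w\<in>T. \<bar>c' w\<bar>) < (\<Sum>w\<in>T. \<bar>c w\<bar>)"
      using T(1) less.prems(2) le lt[OF less.prems(2) cv] by (intro sum_strict_mono_ex1) auto
    then have "nat (\<Sum>w\<in>T. \<bar>c' w\<bar>) < nat (\<Sum>w\<in>T. \<bar>c w\<bar>)"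
      using sum_nonneg[of T "\<lambda>w. \<bar>c' w\<bar>"] by linarith
    then show False using less.hyps[OF _ rel less.prems(2) cv] by blast
  next
    case False
    then obtain w where w: "w \<in> T" "\<not> p dvd c w" by blast
    define c0 where "c0 x = (if x \<in> T then c x else 0)" for x
    have "(\<Sum>x\<in>X. of_int (c0 x) * x) = (\<Sum>x\<in>T. of_int (c0 x) * x)"
      using X T unfolding p_independent_def by (intro sum.mono_neutral_right) (auto simp: c0_def)
    also have "\<dots> = (\<Sum>x\<in>T. of_int (c x) * x)" by (rule sum.cong) (auto simp: c0_def)
    finally have "(\<Sum>x\<in>X. of_int (c0 x) * x) = (\<Sum>x\<in>T. of_int (c x) * x)" .
    then have "(\<Sum>x\<in>X. of_int (c0 x) * x) = of_int p * 0" using less.prems(1) by simp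
    then have "p dvd c0 w" using X A w(1) T(2) unfolding p_independent_def by blast
    then show False using w unfolding c0_def by simp
  qed
qed

lemma exists_common_denominator:
  fixes u :: "complex \<Rightarrow> rat"
  assumes "finite T"
  shows "\<exists>D::int. D > 0 \<and> (\<forall>w\<in>T. \<exists>c::int. of_int D * u w = of_int c)"
  using assms
proof (induction T rule: finite_induct)
  case empty
  then show ?case by (auto intro!: exI[of _ 1])
next
  case (insert w T)
  then obtain D where D: "D > 0" "\<forall>w\<in>T. \<exists>c::int. of_int D * u w = of_int c" by blast
  obtain a b where ab: "quotient_of (u w) = (a, b)" by (cases "quotient_of (u w)")
  have b: "b > 0" using quotient_of_denom_pos[OF ab] .
  have uw: "u w = of_int a / of_int b" using quotient_of_div[OF ab] .
  have "\<exists>c::int. of_int (D * b) * u w' = of_int c" if w': "w' \<in> insert w T" for w'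
  proof (cases "w' = w")
    case True
    then show ?thesis using b uw by (intro exI[of _ "D * a"]) (simp add: field_simps)
  next
    case False
    then obtain c where "of_int D * u w' = of_int c" using D w' by auto
    then show ?thesis by (intro exI[of _ "b * c"]) (simp add: algebra_simps)
  qed
  then show ?case using D b by (intro exI[of _ "D * b"]) auto
qed

lemma p_independent_imp_independent:
  assumes X: "p_independent A p X" and p: "\<bar>p\<bar> \<ge> 2" and A: "0 \<in> A"
  shows "rat_vs.independent X"
  unfolding rat_vs.independent_explicit_module
proof (intro allI impI)
  fix T u v
  assume T: "finite T" "T \<subseteq> X" and rel: "(\<Sum>v\<in>T. of_rat (u v) * v) = 0" and v: "v \<in> T"
  obtain D where D: "D > 0" "\<forall>w\<in>T. \<exists>c::int. of_int D * u w = of_int c"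
    using exists_common_denominator[OF T(1), of u] by blast
  then obtain c where c: "\<And>w. w \<in> T \<Longrightarrow> of_int D * u w = of_int (c w)" by metis
  have "(\<Sum>w\<in>T. of_int (c w) * w) = (\<Sum>w\<in>T. of_int D * (of_rat (u w) * w) :: complex)"
  proof (rule sum.cong)
    fix w assume "w \<in> T"
    have "(of_int (c w) :: complex) = of_rat (of_int D * u w)" using c[OF \<open>w \<in> T\<close>] by simp
    then show "of_int (c w) * w = of_int D * (of_rat (u w) * w)" by (simp add: of_rat_mult)
  qed simp
  also have "\<dots> = 0" using rel by (simp flip: sum_distrib_left)
  finally have "c v = 0" using p_independent_no_int_relation[OF X p A T] v by blast
  then show "u v = 0" using c[OF v] D(1) by simp
qed

lemma relation_if_not_p_independent_insert:
  assumes A: "is_subring A" and X: "p_independent A p X" and y: "y \<in> A" "y \<notin> X"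
    and dep: "\<not> p_independent A p (insert y X)"
  obtains c z where "z \<in> A" and "of_int (c y) * y = z * of_int p - (\<Sum>x\<in>X. of_int (c x) * x)"
    and "\<not> p dvd c y"
proof -
  have fin: "finite X" and XA: "X \<subseteq> A" using X unfolding p_independent_def by auto
  obtain c z where z: "z \<in> A" and rel: "(\<Sum>x\<in>insert y X. of_int (c x) * x) = of_int p * z"
    and ndvd: "\<exists>x\<in>insert y X. \<not> p dvd c x"
    using dep fin XA y(1) unfolding p_independent_def by blast
  have rel': "of_int (c y) * y = z * of_int p - (\<Sum>x\<in>X. of_int (c x) * x)"
    using rel y(2) fin by (simp add: algebra_simps)
  have "\<not> p dvd c y"
  proof
    assume "p dvd c y"
    then obtain m where m: "c y = p * m" by blast
    have "(\<Sum>x\<in>X. of_int (c x) * x) = of_int p * (z - of_int m * y)"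
      using rel' m by (simp add: algebra_simps)
    moreover have "z - of_int m * y \<in> A"
      using z y(1) by (intro subring_diff[OF A] subring_mult[OF A] subring_of_int[OF A])
    ultimately have "\<forall>x\<in>X. p dvd c x" using X unfolding p_independent_def by blast
    then show False using ndvd \<open>p dvd c y\<close> by blast
  qed
  then show thesis using that z rel' by blast
qed

lemma mem_gen_ideal_if_not_p_independent_insert:
  assumes A: "is_subring A" and p: "prime p" and X: "p_independent A p X" and y: "y \<in> A" "y \<notin> X"
    and dep: "\<not> p_independent A p (insert y X)"
  shows "y \<in> gen_ideal A (insert (of_int p) X)"
proof -
  obtain c z where z: "z \<in> A" and rel: "of_int (c y) * y = z * of_int p - (\<Sum>x\<in>X. of_int (c x) * x)"
    and ndvd: "\<not> p dvd c y"
    using relation_if_not_p_independent_insert[OF A X y dep] by blast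
  define G where "G = gen_ideal A (insert (of_int p) X)"
  have fin: "finite X" and XA: "X \<subseteq> A" using X unfolding p_independent_def by auto
  have GI: "is_ideal A G"
    unfolding G_def using subring_of_int[OF A] XA by (intro is_ideal_gen_ideal[OF A]) auto
  have pG: "of_int p \<in> G" and XG: "X \<subseteq> G" unfolding G_def using gen_ideal_superset by blast+
  obtain u w where uw: "u * c y + w * p = 1"
    using bezout_int[of "c y" p] prime_imp_coprime_int[OF p ndvd]
    by (auto simp: gcd.commute coprime_iff_gcd_eq_1)
  have "y = of_int (u * c y + w * p) * y" using uw by simp
  also have "\<dots> = of_int u * (of_int (c y) * y) + of_int w * (y * of_int p)"
    by (simp add: algebra_simps)
  also have "\<dots> = of_int u * (z * of_int p - (\<Sum>x\<in>X. of_int (c x) * x)) + of_int w * (y * of_int p)"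
    unfolding rel ..
  also have "\<dots> \<in> G"
  proof -
    have "(\<Sum>x\<in>X. of_int (c x) * x) \<in> G"
      using fin XG by (intro ideal_sum[OF _ GI] ideal_lmult[OF GI subring_of_int[OF A]]) auto
    then have "z * of_int p - (\<Sum>x\<in>X. of_int (c x) * x) \<in> G"
      using ideal_lmult[OF GI z pG] ideal_diff[OF A GI] by blast
    then show ?thesis
      using ideal_lmult[OF GI y(1) pG] ideal_add[OF GI] ideal_lmult[OF GI subring_of_int[OF A]] by blast
  qed
  finally show ?thesis unfolding G_def .
qed

text \<open>A \<open>p\<close>-independent family is \<open>\<rat>\<close>-linearly independent, so one of maximal size exists;
  by maximality it generates \<open>P\<close> together with \<open>p\<close>.\<close>

lemma maximal_ideal_finitely_generated:
  assumes A: "is_subring A" and B: "finite B" "A \<subseteq> rat_vs.span B"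
    and P: "maximal_ideal A P" and p: "prime (p::int)" and pP: "of_int p \<in> P"
  shows "\<exists>X. finite X \<and> X \<subseteq> P \<and> P \<subseteq> gen_ideal A (insert (of_int p) X)"
proof -
  have PA: "P \<subseteq> A" using P ideal_subset unfolding maximal_ideal_def by blast
  have p2: "\<bar>p\<bar> \<ge> 2" using prime_gt_1_int[OF p] by simp
  define good where "good k \<longleftrightarrow> (\<exists>X. X \<subseteq> P \<and> p_independent A p X \<and> card X = k)" for k
  have "good 0" unfolding good_def p_independent_def by (intro exI[of _ "{}"]) auto
  moreover have "k \<le> card B" if "good k" for k
    using that rat_vs.independent_span_bound[OF B(1) p_independent_imp_independent[OF _ p2]]
      subring_zero[OF A] B(2) unfolding good_def p_independent_def by blast
  ultimately obtain k where "good k" and k_max: "\<And>k'. good k' \<Longrightarrow> k' \<le> k"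
    using Nat.ex_has_greatest_nat[of good 0 "card B"] by blast
  then obtain X where X: "X \<subseteq> P" "p_independent A p X" "card X = k" unfolding good_def by blast
  have fin: "finite X" using X(2) unfolding p_independent_def by simp
  have "y \<in> gen_ideal A (insert (of_int p) X)" if yP: "y \<in> P" for y
  proof (cases "y \<in> X")
    case True
    then show ?thesis using gen_ideal_superset by blast
  next
    case False
    have "\<not> good (Suc k)" using k_max by fastforce
    then have "\<not> p_independent A p (insert y X)"
      using yP False X fin unfolding good_def by (metis card_insert_disjoint insert_subset)
    then show ?thesis
      using mem_gen_ideal_if_not_p_independent_insert[OF A p X(2) _ False] yP PA by blast
  qed
  then show ?thesis using fin X(1) by blast
qed

section \<open>Powers of finitely generated ideals\<close>

definition monomials :: "complex set \<Rightarrow> nat \<Rightarrow> complex set" where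
  "monomials S n = {\<Prod>s\<in>S. s ^ \<alpha> s | \<alpha>. sum \<alpha> S = n}"

lemma monomials_subset:
  "is_subring A \<Longrightarrow> finite S \<Longrightarrow> S \<subseteq> A \<Longrightarrow> monomials S n \<subseteq> A"
  unfolding monomials_def by (auto intro!: subring_prod subring_power)

lemma monomial_times_mem_monomials:
  assumes S: "finite S" and b: "b \<in> S" and m: "m \<in> monomials S n"
  shows "m * b \<in> monomials S (Suc n)"
proof -
  obtain \<alpha> where m: "m = (\<Prod>s\<in>S. s ^ \<alpha> s)" and deg: "sum \<alpha> S = n"
    using m unfolding monomials_def by auto
  define \<beta> where "\<beta> = \<alpha>(b := Suc (\<alpha> b))"
  have same: "\<beta> s = \<alpha> s" if "s \<in> S - {b}" for s
    using that unfolding \<beta>_def by simp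
  have "sum \<beta> S = Suc (\<alpha> b) + sum \<alpha> (S - {b})"
    unfolding sum.remove[OF S b] using same by (simp add: \<beta>_def)
  also have "\<dots> = Suc n" using sum.remove[OF S b, of \<alpha>] deg by simp
  finally have "sum \<beta> S = Suc n" .
  moreover have "(\<Prod>s\<in>S. s ^ \<beta> s) = b ^ Suc (\<alpha> b) * (\<Prod>s\<in>S - {b}. s ^ \<alpha> s)"
    unfolding prod.remove[OF S b] using same by (simp add: \<beta>_def)
  moreover have "m = b ^ \<alpha> b * (\<Prod>s\<in>S - {b}. s ^ \<alpha> s)"
    unfolding m prod.remove[OF S b] ..
  ultimately have "sum \<beta> S = Suc n" and "(\<Prod>s\<in>S. s ^ \<beta> s) = m * b"
    by (simp_all add: mult_ac)
  then show ?thesis unfolding monomials_def by (intro CollectI exI[of _ \<beta>]) simp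
qed

lemma ideal_pow_subset_gen_ideal_monomials:
  assumes A: "is_subring A" and S: "finite S" "S \<subseteq> A" and PS: "P \<subseteq> gen_ideal A S"
  shows "ideal_pow A P n \<subseteq> gen_ideal A (monomials S n)"
proof (induction n)
  case 0
  have "1 \<in> monomials S 0" unfolding monomials_def by (auto intro!: exI[of _ "\<lambda>_. 0"])
  then have "1 \<in> gen_ideal A (monomials S 0)" using gen_ideal_superset by blast
  then show ?case
    using ideal_rmult[OF is_ideal_gen_ideal[OF A monomials_subset[OF A S]], of _ 1] by auto
next
  case (Suc n)
  have G: "is_ideal A (gen_ideal A (monomials S (Suc n)))"
    by (rule is_ideal_gen_ideal[OF A monomials_subset[OF A S]])
  show ?case unfolding ideal_pow.simps ideal_mult_def
  proof (rule gen_ideal_minimal[OF G], clarify)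
    fix x y assume "x \<in> ideal_pow A P n" and "y \<in> P"
    show "x * y \<in> gen_ideal A (monomials S (Suc n))"
    proof (rule gen_ideal_mult_closed[OF A monomials_subset[OF A S] S(2) G])
      show "x \<in> gen_ideal A (monomials S n)" using Suc \<open>x \<in> ideal_pow A P n\<close> ..
      show "y \<in> gen_ideal A S" using PS \<open>y \<in> P\<close> ..
    next
      fix m b assume "m \<in> monomials S n" and "b \<in> S"
      then show "m * b \<in> gen_ideal A (monomials S (Suc n))"
        using monomial_times_mem_monomials[OF S(1)] gen_ideal_superset by blast
    qed
  qed
qed

text \<open>Pigeonhole: a monomial of total degree \<open>\<Sum>s. N s\<close> has some exponent \<open>\<alpha> s \<ge> N s\<close>.\<close>

lemma monomials_subset_ideal:
  assumes A: "is_subring A" and Q: "is_ideal A Q" and S: "finite S" "S \<noteq> {}" "S \<subseteq> A"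
    and N: "\<And>s. s \<in> S \<Longrightarrow> s ^ N s \<in> Q"
  shows "monomials S (\<Sum>s\<in>S. N s) \<subseteq> Q"
proof
  fix m assume "m \<in> monomials S (\<Sum>s\<in>S. N s)"
  then obtain \<alpha> where m: "m = (\<Prod>s\<in>S. s ^ \<alpha> s)" and deg: "sum \<alpha> S = (\<Sum>s\<in>S. N s)"
    unfolding monomials_def by auto
  obtain b where b: "b \<in> S" "N b \<le> \<alpha> b"
  proof (rule ccontr)
    assume "\<not> thesis"
    then have "sum \<alpha> S < (\<Sum>s\<in>S. N s)"
      using that S(1,2) by (intro sum_strict_mono) (auto simp: not_le[symmetric])
    then show False using deg by simp
  qed
  define R where "R = b ^ (\<alpha> b - N b) * (\<Prod>s\<in>S - {b}. s ^ \<alpha> s)"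
  have "m = b ^ N b * R"
    unfolding m R_def prod.remove[OF S(1) b(1)] using b(2) by (simp flip: power_add add: mult.assoc)
  moreover have "R \<in> A"
    unfolding R_def using A S b by (intro subring_mult subring_power subring_prod) auto
  ultimately show "m \<in> Q" using ideal_rmult[OF Q _ N[OF b(1)]] by simp
qed

lemma ideal_pow_subset_if_generator_powers:
  assumes A: "is_subring A" and Q: "is_ideal A Q" and S: "finite S" "S \<noteq> {}" "S \<subseteq> A"
    and PS: "P \<subseteq> gen_ideal A S" and N: "\<And>s. s \<in> S \<Longrightarrow> s ^ N s \<in> Q"
  shows "ideal_pow A P (\<Sum>s\<in>S. N s) \<subseteq> Q"
  using ideal_pow_subset_gen_ideal_monomials[OF A S(1,3) PS]
    gen_ideal_minimal[OF Q monomials_subset_ideal[OF A Q S N]] by blast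

section \<open>Localisation at a maximal ideal and the kernel of \<open>pr\<^sub>t\<close>\<close>

text \<open>The contraction to \<open>A\<close> of the localisation \<open>I A\<^sub>P\<close>.\<close>

definition saturation :: "complex set \<Rightarrow> complex set \<Rightarrow> complex set \<Rightarrow> complex set" where
  "saturation A P I = {y \<in> A. \<exists>s\<in>A - P. s * y \<in> I}"

lemma is_ideal_saturation:
  assumes A: "is_subring A" and P: "maximal_ideal A P" and I: "is_ideal A I"
  shows "is_ideal A (saturation A P I)"
  unfolding is_ideal_def
proof (intro conjI ballI)
  show "saturation A P I \<subseteq> A" unfolding saturation_def by blast
  show "0 \<in> saturation A P I"
    unfolding saturation_def using subring_zero[OF A] subring_one[OF A]
      maximal_ideal_one_notin[OF P] ideal_zero[OF I] by force
next
  fix x y assume "x \<in> saturation A P I" "y \<in> saturation A P I"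
  then obtain s u where s: "s \<in> A" "s \<notin> P" "s * x \<in> I" and u: "u \<in> A" "u \<notin> P" "u * y \<in> I"
    and xy: "x \<in> A" "y \<in> A" unfolding saturation_def by blast
  have "s * u \<notin> P" using maximal_ideal_prime[OF A P s(1) u(1)] s(2) u(2) by blast
  moreover have "(s * u) * (x + y) = u * (s * x) + s * (u * y)" by (simp add: algebra_simps)
  ultimately show "x + y \<in> saturation A P I"
    unfolding saturation_def using s u xy ideal_add[OF I] ideal_lmult[OF I] subring_add[OF A]
      subring_mult[OF A] by (metis (mono_tags, lifting) DiffI mem_Collect_eq)
next
  fix a x assume a: "a \<in> A" and "x \<in> saturation A P I"
  then obtain s where s: "s \<in> A - P" "s * x \<in> I" and x: "x \<in> A" unfolding saturation_def by blast
  have "s * (a * x) \<in> I" using ideal_lmult[OF I a s(2)] by (simp add: algebra_simps)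
  then show "a * x \<in> saturation A P I"
    unfolding saturation_def using s(1) subring_mult[OF A a x] by blast
qed

lemma ideal_subset_saturation:
  assumes A: "is_subring A" and P: "maximal_ideal A P" and I: "is_ideal A I"
  shows "I \<subseteq> saturation A P I"
  unfolding saturation_def using subring_one[OF A] maximal_ideal_one_notin[OF P] ideal_subset[OF I]
  by force

lemma power_mem_saturation_if_congruing:
  assumes A: "is_subring A" and P: "maximal_ideal A P" and s: "s \<in> P" and t: "t > 0"
    and I: "s ^ N * (s ^ t - 1) \<in> I"
  shows "s ^ N \<in> saturation A P I"
proof -
  have PI: "is_ideal A P" using P by (simp add: maximal_ideal_def)
  have sA: "s \<in> A" using s ideal_subset[OF PI] by blast
  have "s ^ t \<in> P" using t s ideal_lmult[OF PI subring_power[OF A sA]] power_Suc2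
    by (metis Suc_pred)
  then have "s ^ t - 1 \<notin> P"
    using maximal_ideal_one_notin[OF P] ideal_diff[OF A PI, of "s ^ t" "s ^ t - 1"] by auto
  moreover have "s ^ t - 1 \<in> A" using A sA by (simp add: subring_diff subring_power subring_one)
  moreover have "(s ^ t - 1) * s ^ N \<in> I" using I by (simp add: mult.commute)
  ultimately show ?thesis
    unfolding saturation_def using subring_power[OF A sA] by blast
qed

lemma prime_power_mem_saturation:
  assumes A: "is_subring A" and P: "maximal_ideal A P"
    and p: "prime p" "of_nat p \<in> P" and M: "of_nat M \<in> I" "M > 0"
  shows "of_nat p ^ multiplicity p M \<in> saturation A P I"
proof -
  have "M \<noteq> 0" and "\<not> is_unit p" using M(2) p(1) not_prime_unit by blast+
  then obtain M' where M': "M = p ^ multiplicity p M * M'" "\<not> p dvd M'"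
    by (rule multiplicity_decompose')
  have "of_nat M' \<notin> P" by (rule of_nat_notin_maximal_ideal_if_not_dvd[OF A P p M'(2)])
  moreover have "of_nat M' * of_nat p ^ multiplicity p M = (of_nat M :: complex)"
    by (subst (2) M'(1)) (simp add: mult.commute)
  ultimately show ?thesis
    unfolding saturation_def using M(1) subring_of_nat[OF A] subring_power[OF A]
    by (metis (mono_tags, lifting) DiffI mem_Collect_eq of_nat_power)
qed

lemma ideal_pow_subset_saturation:
  assumes A: "is_subring A" and B: "finite B" "A \<subseteq> rat_vs.span B" and t: "t > 0"
    and P: "maximal_ideal A P" and I: "is_ideal A I" "I \<subseteq> P" "t_congruing A t I"
  shows "\<exists>n. ideal_pow A P n \<subseteq> saturation A P I"
proof -
  have PI: "is_ideal A P" using P by (simp add: maximal_ideal_def)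
  have cong: "\<exists>N. s ^ N * (s ^ t - 1) \<in> I" if "s \<in> P" for s
    using I(3) that ideal_subset[OF PI] unfolding t_congruing_def by blast
  obtain N where "2 ^ N * (2 ^ t - 1) \<in> I"
    using I(3) subring_of_nat[OF A, of 2] unfolding t_congruing_def by auto
  moreover define M where "M = 2 ^ N * (2 ^ t - 1 :: nat)"
  ultimately have MI: "of_nat M \<in> I" by (simp add: of_nat_diff)
  have "M > 0" unfolding M_def using t one_less_power[of "2::nat" t] by simp
  then obtain p where p: "prime p" "of_nat p \<in> P"
    using maximal_ideal_contains_prime[OF A P] MI I(2) by blast
  obtain X where X: "finite X" "X \<subseteq> P" "P \<subseteq> gen_ideal A (insert (of_nat p) X)"
    using maximal_ideal_finitely_generated[OF A B P, of "int p"] p by auto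
  then have "\<forall>s\<in>X. \<exists>N. s ^ N * (s ^ t - 1) \<in> I" using cong by blast
  then obtain N where N: "\<And>s. s \<in> X \<Longrightarrow> s ^ N s * (s ^ t - 1) \<in> I" by metis
  define N' where "N' s = (if s = of_nat p then multiplicity p M else N s)" for s
  have "s ^ N' s \<in> saturation A P I" if "s \<in> insert (of_nat p) X" for s
    using that prime_power_mem_saturation[OF A P p MI \<open>M > 0\<close>]
      power_mem_saturation_if_congruing[OF A P _ t N] X(2) unfolding N'_def by auto
  then have "ideal_pow A P (\<Sum>s\<in>insert (of_nat p) X. N' s) \<subseteq> saturation A P I"
    using X p(2) ideal_subset[OF PI]
    by (intro ideal_pow_subset_if_generator_powers[OF A is_ideal_saturation[OF A P I(1)]]) auto
  then show ?thesis by blast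
qed

text \<open>Inverting \<open>G\<close> modulo \<open>Q\<close> cancels the factor \<open>G\<^sup>L\<close>.\<close>

lemma pow_minus_one_mem_if_invertible_mod:
  assumes A: "is_subring A" and Q: "is_ideal A Q" and G: "G \<in> A" and Y: "Y \<in> A"
    and inv: "G * Y - 1 \<in> Q" and L: "G ^ L * (G ^ t - 1) \<in> Q"
  shows "G ^ t - 1 \<in> Q"
proof -
  have GY: "(G * Y) ^ L - 1 \<in> Q"
    using power_diff_1_eq[of "G * Y" L] ideal_rmult[OF Q _ inv]
      subring_sum[OF _ A, of "{..<L}" "\<lambda>i. (G * Y) ^ i"] subring_power[OF A subring_mult[OF A G Y]]
    by simp
  have "G ^ t - 1 = Y ^ L * (G ^ L * (G ^ t - 1)) - ((G * Y) ^ L - 1) * (G ^ t - 1)"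
    by (simp add: power_mult_distrib algebra_simps)
  also have "\<dots> \<in> Q"
    using ideal_lmult[OF Q subring_power[OF A Y] L]
      ideal_rmult[OF Q subring_diff[OF A subring_power[OF A G] subring_one[OF A]] GY]
    by (rule ideal_diff[OF A Q])
  finally show ?thesis .
qed

lemma const_mem_if_mem_H_loc:
  assumes A: "is_subring A" and Q: "is_ideal A Q" "t_congruing A t Q"
    and PQ: "ideal_pow A P n \<subseteq> Q" and a: "(\<lambda>_. a) \<in> H_loc A P t"
  shows "a \<in> Q"
proof -
  obtain k :: nat and c g where cg: "\<forall>i<k. c i \<in> completion A P \<and> g i \<in> compl_units A P"
    and eq: "compl_eq A P (\<lambda>_. a) (\<lambda>n. \<Sum>i<k. c i n * (g i n ^ t - 1))"
    using a unfolding H_loc_def mem_Collect_eq by (elim conjE exE)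
  have "g i n ^ t - 1 \<in> Q" if i: "i < k" for i
  proof -
    obtain y where y: "y \<in> completion A P" "compl_eq A P (\<lambda>n. g i n * y n) (\<lambda>n. 1)"
      and g: "g i \<in> completion A P"
      using cg i unfolding compl_units_def by blast
    have "g i n \<in> A" "y n \<in> A" using g y(1) unfolding completion_def by blast+
    moreover have "g i n * y n - 1 \<in> Q" using y(2) PQ unfolding compl_eq_def by blast
    moreover obtain L where "g i n ^ L * (g i n ^ t - 1) \<in> Q"
      using Q(2) \<open>g i n \<in> A\<close> unfolding t_congruing_def by blast
    ultimately show ?thesis by (intro pow_minus_one_mem_if_invertible_mod[OF A Q(1)])
  qed
  then have "(\<Sum>i<k. c i n * (g i n ^ t - 1)) \<in> Q"
    using cg unfolding completion_def by (intro ideal_sum[OF _ Q(1)] ideal_lmult[OF Q(1)]) auto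
  moreover have "a - (\<Sum>i<k. c i n * (g i n ^ t - 1)) \<in> Q" using eq PQ unfolding compl_eq_def by blast
  ultimately have "(a - (\<Sum>i<k. c i n * (g i n ^ t - 1))) + (\<Sum>i<k. c i n * (g i n ^ t - 1)) \<in> Q"
    by (intro ideal_add[OF Q(1)])
  then show "a \<in> Q" by simp
qed

lemma t_congruing_mono: "t_congruing A t I \<Longrightarrow> I \<subseteq> J \<Longrightarrow> t_congruing A t J"
  unfolding t_congruing_def by blast

lemma ker_pr_subset_congruing_ideal:
  assumes A: "is_subring A" and B: "finite B" "A \<subseteq> rat_vs.span B" and t: "t > 0"
    and I: "is_ideal A I" "t_congruing A t I"
  shows "ker_pr A t \<subseteq> I"
proof
  fix a assume a: "a \<in> ker_pr A t"
  then have aA: "a \<in> A" unfolding ker_pr_def by blast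
  show "a \<in> I"
  proof (rule ccontr)
    assume "a \<notin> I"
    define J where "J = {y \<in> A. y * a \<in> I}"
    have "is_ideal A J" unfolding J_def by (rule is_ideal_colon[OF A I(1)])
    moreover have "1 \<notin> J" using \<open>a \<notin> I\<close> unfolding J_def by simp
    ultimately obtain P where P: "maximal_ideal A P" "J \<subseteq> P"
      using exists_maximal_ideal_superset[OF A] by blast
    have "I \<subseteq> J" unfolding J_def using ideal_subset[OF I(1)] ideal_rmult[OF I(1) aA] by blast
    then have "I \<subseteq> P" using P(2) by blast
    then obtain n where n: "ideal_pow A P n \<subseteq> saturation A P I"
      using ideal_pow_subset_saturation[OF A B t P(1) I(1) _ I(2)] by blast
    have "t_congruing A t (saturation A P I)"
      using t_congruing_mono[OF I(2) ideal_subset_saturation[OF A P(1) I(1)]] .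
    moreover have "(\<lambda>_. a) \<in> H_loc A P t" using a P(1) unfolding ker_pr_def by blast
    ultimately have "a \<in> saturation A P I"
      by (rule const_mem_if_mem_H_loc[OF A is_ideal_saturation[OF A P(1) I(1)] _ n])
    then obtain s where "s \<in> A - P" "s * a \<in> I" unfolding saturation_def by blast
    then show False using P(2) unfolding J_def by blast
  qed
qed

lemma H_ft_generator_mem: "k \<in> A \<Longrightarrow> k ^ f k * (k ^ t - 1) \<in> H_ft A f t"
  unfolding H_ft_def by (rule subsetD[OF gen_ideal_superset]) blast

lemma is_ideal_H_ft:
  assumes A: "is_subring A"
  shows "is_ideal A (H_ft A f t)"
  unfolding H_ft_def
proof (rule is_ideal_gen_ideal[OF A], clarify)
  fix k assume "k \<in> A"
  then show "k ^ f k * (k ^ t - 1) \<in> A"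
    by (intro subring_mult[OF A] subring_diff[OF A] subring_power[OF A] subring_one[OF A])
qed

lemma t_congruing_H_ft: "t_congruing A t (H_ft A f t)"
  unfolding t_congruing_def
proof
  fix a assume "a \<in> A"
  show "\<exists>N. a ^ N * (a ^ t - 1) \<in> H_ft A f t" using H_ft_generator_mem[OF \<open>a \<in> A\<close>] ..
qed

theorem mainTheorem13:
  fixes K :: "complex set" and f :: "complex \<Rightarrow> nat" and t :: nat
  assumes "number_field K" and "t > 0"
  shows "ker_pr (ring_of_integers K) t \<subseteq> H_ft (ring_of_integers K) f t \<and>
         t_congruing (ring_of_integers K) t (H_ft (ring_of_integers K) f t)"
proof -
  let ?A = "ring_of_integers K"
  have A: "is_subring ?A"
    using assms(1) subring_ring_of_integers unfolding number_field_def by blast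
  obtain B where "finite B" "K \<subseteq> rat_vs.span B"
    using assms(1) finite_over_rat_imp_subset_span unfolding number_field_def by blast
  moreover have "?A \<subseteq> K" unfolding ring_of_integers_def by blast
  ultimately have "ker_pr ?A t \<subseteq> H_ft ?A f t"
    using ker_pr_subset_congruing_ideal[OF A _ _ assms(2) is_ideal_H_ft[OF A] t_congruing_H_ft]
    by blast
  then show ?thesis using t_congruing_H_ft by blast
qed

end
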